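(* Let $\mu\in[0,1]$, $A\in\mathbb R^{q\times n}$ of full row rank, $b\in\mathbb R^q$, $\gamma>0$, $\delta\in(0,\|b\|_{LL_2,\gamma})$, $g(x):=\|Ax-b\|_{LL_2,\gamma}-\delta$ and $F(x):=\|x\|_1-\mu\|x\|+\delta_{\{g\le0\}}(x)$. Then: (i) MFCQ holds at every feasible point, i.e., for every $x$ with $g(x)\le0$ and $g(x)=0$ one has $\nabla g(x)\neq0$; (ii) if $\mu\in[0,1)$, $F$ is level-bounded; (iii) if $\mu=1$ and $A$ has no zero columns, $F$ is level-bounded.
   Context: For $y\in\mathbb R^q$, the Lorentzian norm is $\|y\|_{LL_2,\gamma}:=\sum_{i=1}^q\log\big(1+y_i^2/\gamma^2\big)$. $\|\cdot\|_1$ is the $\ell_1$ norm and $\|\cdot\|$ the Euclidean norm; $\delta_C$ is the indicator function of $C$. For a single smooth constraint $g\le0$, MFCQ at a feasible $x$ means: if $g(x)=0$ there exists $d$ with $\langle\nabla g(x),d\rangle<0$, equivalently $\nabla g(x)\ne0$. A function is level-bounded if all its sublevel sets are bounded. *)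

theory Defs
  imports "HOL-Analysis.Analysis"
begin

definition LL2 :: "real \<Rightarrow> real^'q \<Rightarrow> real" where
  "LL2 \<gamma> y = (\<Sum>i\<in>UNIV. ln (1 + (y $ i)^2 / \<gamma>^2))"

definition l1norm :: "real^'n \<Rightarrow> real" where
  "l1norm x = (\<Sum>i\<in>UNIV. \<bar>x $ i\<bar>)"

definition indicator_fun :: "'a set \<Rightarrow> 'a \<Rightarrow> ereal" where
  "indicator_fun C x = (if x \<in> C then 0 else \<infinity>)"

definition level_bounded :: "('a::metric_space \<Rightarrow> ereal) \<Rightarrow> bool" where
  "level_bounded F \<longleftrightarrow> (\<forall>\<alpha>::real. bounded {x. F x \<le> ereal \<alpha>})"

end

theory Submission
  imports Defs
begin

text \<open>
  (i) With \<open>r = A x - b\<close>, the gradient of \<open>g\<close> is \<open>A\<^sup>T \<nabla>LL2(r)\<close>; the gradient of the Lorentzian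
  norm vanishes only at \<open>r = 0\<close>, where \<open>g = -\<delta> < 0\<close>, and \<open>A\<^sup>T\<close> is injective by full row rank.
  (ii) \<open>\<parallel>x\<parallel> \<le> \<parallel>x\<parallel>\<^sub>1\<close> gives \<open>(1 - \<mu>) \<parallel>x\<parallel> \<le> F x\<close>.
  (iii) For \<open>\<mu> = 1\<close> let \<open>x\<^sub>k\<close> be a largest coordinate and \<open>s\<close> the \<open>\<ell>\<^sub>1\<close>-mass of the others. Since
  \<open>s \<le> (n - 1) \<bar>x\<^sub>k\<bar>\<close> and \<open>\<parallel>x\<parallel> \<le> sqrt (x\<^sub>k\<^sup>2 + s\<^sup>2)\<close>, the gap \<open>\<parallel>x\<parallel>\<^sub>1 - \<parallel>x\<parallel>\<close> bounds \<open>s\<close>.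
  Feasibility bounds \<open>A x\<close>, so \<open>\<bar>x\<^sub>k\<bar> \<parallel>A e\<^sub>k\<parallel> \<le> \<parallel>A x\<parallel> + \<parallel>A (x - x\<^sub>k e\<^sub>k)\<parallel>\<close> is bounded as well,
  using that the \<open>k\<close>-th column is nonzero.
\<close>

definition LL2_grad :: "real \<Rightarrow> real^'q \<Rightarrow> real^'q" where
  "LL2_grad \<gamma> y = (\<chi> i. 2 * y $ i / (\<gamma>^2 + (y $ i)^2))"

lemma LL2_zero [simp]: "LL2 \<gamma> 0 = 0"
  by (simp add: LL2_def)

lemma has_derivative_LL2:
  assumes "\<gamma> \<noteq> 0"
  shows "(LL2 \<gamma> has_derivative (\<lambda>h. LL2_grad \<gamma> y \<bullet> h)) (at y)"
proof -
  have pos: "0 < \<gamma>^2 + (y $ i)^2" for i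
    using assms by (simp add: add_pos_nonneg)
  have "((\<lambda>y. ln (1 + (y $ i)^2 / \<gamma>^2)) has_derivative
          (\<lambda>h. 2 * y $ i / (\<gamma>^2 + (y $ i)^2) * h $ i)) (at y)" for i
  proof (rule has_derivative_eq_rhs)
    show "((\<lambda>y. ln (1 + (y $ i)^2 / \<gamma>^2)) has_derivative
          (\<lambda>h. inverse (1 + (y $ i)^2 / \<gamma>^2) * (2 * y $ i * h $ i / \<gamma>^2))) (at y)"
      by (auto intro!: derivative_eq_intros bounded_linear_imp_has_derivative
          simp: assms add_pos_nonneg power2_eq_square)
    show "(\<lambda>h. inverse (1 + (y $ i)^2 / \<gamma>^2) * (2 * y $ i * h $ i / \<gamma>^2))
        = (\<lambda>h. 2 * y $ i / (\<gamma>^2 + (y $ i)^2) * h $ i)"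
      using assms pos[of i] by (auto simp: field_simps)
  qed
  then have "((\<lambda>y. \<Sum>i\<in>UNIV. ln (1 + (y $ i)^2 / \<gamma>^2)) has_derivative
          (\<lambda>h. \<Sum>i\<in>UNIV. 2 * y $ i / (\<gamma>^2 + (y $ i)^2) * h $ i)) (at y)"
    by (rule has_derivative_sum)
  then show ?thesis
    by (simp add: LL2_def[abs_def] LL2_grad_def inner_vec_def mult.commute)
qed

lemma LL2_grad_eq_0_iff:
  assumes "\<gamma> \<noteq> 0"
  shows "LL2_grad \<gamma> y = 0 \<longleftrightarrow> y = 0"
proof -
  have "0 < \<gamma>^2 + (y $ i)^2" for i
    using assms by (simp add: add_pos_nonneg)
  then show ?thesis
    by (auto simp: LL2_grad_def vec_eq_iff)
qed

lemma has_derivative_LL2_affine: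
  fixes A :: "real^'n^'q"
  assumes "\<gamma> \<noteq> 0"
  shows "((\<lambda>x. LL2 \<gamma> (A *v x - b)) has_derivative
           (\<lambda>h. (LL2_grad \<gamma> (A *v x - b) v* A) \<bullet> h)) (at x)"
proof -
  have "((\<lambda>x. A *v x - b) has_derivative (\<lambda>h. A *v h)) (at x)"
    by (auto intro!: derivative_eq_intros bounded_linear_imp_has_derivative
        matrix_vector_mul_bounded_linear)
  from has_derivative_compose[OF this has_derivative_LL2[OF assms]]
  show ?thesis
    by (simp add: dot_lmul_matrix o_def)
qed

lemma bounded_LL2_sublevel:
  assumes "\<gamma> \<noteq> 0"
  shows "bounded {y :: real^'q. LL2 \<gamma> y \<le> \<delta>}"
proof -
  define \<rho> where "\<rho> = sqrt (\<gamma>^2 * exp \<delta>)"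
  have "norm y \<le> CARD('q) * \<rho>" if "LL2 \<gamma> y \<le> \<delta>" for y :: "real^'q"
  proof -
    have coord: "\<bar>y $ i\<bar> \<le> \<rho>" for i
    proof -
      have "ln (1 + (y $ i)^2 / \<gamma>^2) \<le> LL2 \<gamma> y"
        unfolding LL2_def by (rule member_le_sum) (auto simp: add_pos_nonneg)
      then have "exp (ln (1 + (y $ i)^2 / \<gamma>^2)) \<le> exp \<delta>"
        using that by simp
      then have "(y $ i)^2 / \<gamma>^2 \<le> exp \<delta>"
        by (simp add: add_pos_nonneg)
      moreover have "0 < \<gamma>^2"
        using assms by simp
      ultimately have "(y $ i)^2 \<le> \<gamma>^2 * exp \<delta>"
        by (simp add: pos_divide_le_eq mult.commute)
      then show ?thesis
        unfolding \<rho>_def by (intro real_le_rsqrt) simp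
    qed
    have "norm y \<le> (\<Sum>i\<in>UNIV. \<bar>y $ i\<bar>)"
      by (rule norm_le_l1_cart)
    also have "\<dots> \<le> CARD('q) * \<rho>"
      using sum_mono[of UNIV "\<lambda>i. \<bar>y $ i\<bar>" "\<lambda>_. \<rho>"] coord by simp
    finally show ?thesis .
  qed
  then show ?thesis
    by (auto simp: bounded_iff)
qed

lemma sqrt_gap_bound:
  fixes a s M \<alpha> :: real
  assumes "0 \<le> a" "0 \<le> s" "0 \<le> M" "s \<le> M * a"
    and gap: "a + s - sqrt (a^2 + s^2) \<le> \<alpha>"
  shows "s \<le> (M + 1) * \<alpha>"
proof -
  have "sqrt (a^2 + s^2) \<le> a + s"
    using sqrt_add_le_add_sqrt[of "a^2" "s^2"] assms by simp
  then have \<alpha>0: "0 \<le> \<alpha>"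
    using gap by linarith
  show ?thesis
  proof (cases "a + s \<le> \<alpha>")
    case True
    then show ?thesis
      using assms \<alpha>0 by (simp add: distrib_right mult_nonneg_nonneg add_increasing)
  next
    case False
    then have "(a + s - \<alpha>)^2 \<le> (sqrt (a^2 + s^2))^2"
      using gap by (intro power_mono) auto
    then have "(a + s - \<alpha>)^2 \<le> a^2 + s^2"
      by simp
    then have "\<alpha> * \<alpha> + 2 * (a * s) \<le> 2 * (\<alpha> * a) + 2 * (\<alpha> * s)"
      by (simp add: power2_eq_square algebra_simps)
    then have "a * s \<le> \<alpha> * a + \<alpha> * s"
      using mult_nonneg_nonneg[OF \<alpha>0 \<alpha>0] by linarith
    also have "\<dots> \<le> \<alpha> * a + \<alpha> * (M * a)"
      using assms \<alpha>0 by (simp add: mult_left_mono)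
    finally have "a * s \<le> a * ((M + 1) * \<alpha>)"
      by (simp add: algebra_simps)
    then show ?thesis
      using assms \<alpha>0 by (cases "a = 0") (auto simp: mult_le_cancel_left_pos)
  qed
qed

definition drop_coord :: "'n \<Rightarrow> real^'n \<Rightarrow> real^'n" where
  "drop_coord k x = (\<chi> j. if j = k then 0 else x $ j)"

lemma sum_drop_coord:
  fixes f :: "'n::finite \<Rightarrow> real \<Rightarrow> 'a::comm_monoid_add"
  assumes "\<And>j. f j 0 = 0"
  shows "(\<Sum>j\<in>UNIV. f j (x $ j)) = f k (x $ k) + (\<Sum>j\<in>UNIV. f j (drop_coord k x $ j))"
proof -
  have "(\<Sum>j\<in>UNIV. f j (x $ j))
      = (\<Sum>j\<in>UNIV. (if j = k then f k (x $ k) else 0) + f j (drop_coord k x $ j))"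
    by (rule sum.cong) (auto simp: drop_coord_def assms)
  then show ?thesis
    by (simp add: sum.distrib)
qed

lemma l1norm_drop_coord: "l1norm x = \<bar>x $ k\<bar> + l1norm (drop_coord k x)"
  unfolding l1norm_def by (rule sum_drop_coord) simp

lemma norm_drop_coord: "(norm x)^2 = (x $ k)^2 + (norm (drop_coord k x))^2"
  using sum_drop_coord[of "\<lambda>_ t. t * t" x k]
  unfolding power2_norm_eq_inner inner_vec_def by (simp add: power2_eq_square)

lemma matrix_vector_mult_drop_coord:
  fixes A :: "real^'n^'q"
  shows "A *v x = x $ k *s column k A + A *v drop_coord k x"
  unfolding matrix_mult_sum by (rule sum_drop_coord) simp

lemma l1norm_drop_max_coord_le:
  fixes x :: "real^'n"
  assumes kmax: "\<And>j. \<bar>x $ j\<bar> \<le> \<bar>x $ k\<bar>"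
  shows "l1norm (drop_coord k x) \<le> (real CARD('n) + 1) * (l1norm x - norm x)"
proof (rule sqrt_gap_bound)
  define y where "y = drop_coord k x"
  show "l1norm y \<le> CARD('n) * \<bar>x $ k\<bar>"
    using sum_mono[of UNIV "\<lambda>j. \<bar>y $ j\<bar>" "\<lambda>_. \<bar>x $ k\<bar>"] kmax
    by (simp add: l1norm_def y_def drop_coord_def)
  have "(norm x)^2 \<le> (x $ k)^2 + (l1norm y)^2"
    using norm_drop_coord[of x k] norm_le_l1_cart[of y]
    by (simp add: y_def l1norm_def power_mono)
  then have "norm x \<le> sqrt (\<bar>x $ k\<bar>^2 + (l1norm y)^2)"
    by (simp add: real_le_rsqrt)
  then show "\<bar>x $ k\<bar> + l1norm y - sqrt (\<bar>x $ k\<bar>^2 + (l1norm y)^2) \<le> l1norm x - norm x"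
    using l1norm_drop_coord[of x k] by (simp add: y_def)
qed (auto simp: l1norm_def sum_nonneg)

lemma bounded_l1_gap_sublevel_preimage:
  fixes A :: "real^'n^'q"
  assumes cols: "\<And>j. column j A \<noteq> 0" and "bounded S"
  shows "bounded {x. l1norm x - norm x \<le> \<alpha> \<and> A *v x \<in> S}"
proof -
  obtain R where R: "\<And>z. z \<in> S \<Longrightarrow> norm z \<le> R"
    using \<open>bounded S\<close> by (auto simp: bounded_iff)
  obtain B where B: "B > 0" "\<And>y. norm (A *v y) \<le> B * norm y"
    using linear_bounded_pos[OF matrix_vector_mul_linear[of A]] by blast
  define c where "c = Min (range (\<lambda>j. norm (column j A)))"
  have "c \<in> range (\<lambda>j. norm (column j A))"
    unfolding c_def by (intro Min_in) auto
  then have c: "c > 0"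
    using cols by auto
  have c_le: "c \<le> norm (column j A)" for j
    unfolding c_def by (intro Min_le) auto
  define N where "N = real CARD('n) + 1"
  have "norm x \<le> (R + B * (N * \<alpha>)) / c + N * \<alpha>"
    if x: "l1norm x - norm x \<le> \<alpha>" "A *v x \<in> S" for x
  proof -
    have "Max (range (\<lambda>j. \<bar>x $ j\<bar>)) \<in> range (\<lambda>j. \<bar>x $ j\<bar>)"
      by (intro Max_in) auto
    then obtain k where k: "\<bar>x $ k\<bar> = Max (range (\<lambda>j. \<bar>x $ j\<bar>))"
      by (metis rangeE)
    then have kmax: "\<bar>x $ j\<bar> \<le> \<bar>x $ k\<bar>" for j
      by simp
    define y where "y = drop_coord k x"
    have "l1norm y \<le> N * (l1norm x - norm x)"
      using l1norm_drop_max_coord_le[OF kmax] by (simp add: N_def y_def)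
    also have "\<dots> \<le> N * \<alpha>"
      using x(1) by (intro mult_left_mono) (simp_all add: N_def)
    finally have y: "l1norm y \<le> N * \<alpha>" .
    have "\<bar>x $ k\<bar> * c \<le> norm (x $ k *s column k A)"
      using c_le[of k] by (simp add: scalar_mult_eq_scaleR mult_left_mono)
    also have "\<dots> \<le> norm (A *v x) + norm (A *v y)"
      using matrix_vector_mult_drop_coord[of A x k] norm_triangle_ineq4[of "A *v x" "A *v y"]
      by (simp add: y_def)
    also have "\<dots> \<le> R + B * l1norm y"
    proof -
      have "B * norm y \<le> B * l1norm y"
        using B(1) norm_le_l1_cart[of y] by (simp add: l1norm_def)
      then show ?thesis
        using R[OF x(2)] B(2)[of y] by linarith
    qed
    also have "\<dots> \<le> R + B * (N * \<alpha>)"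
      using y B(1) by simp
    finally have "\<bar>x $ k\<bar> \<le> (R + B * (N * \<alpha>)) / c"
      using c by (simp add: pos_le_divide_eq)
    then show ?thesis
      using l1norm_drop_coord[of x k] norm_le_l1_cart[of x] y
      by (simp add: l1norm_def y_def)
  qed
  then show ?thesis
    by (auto simp: bounded_iff)
qed

lemma bounded_l1_minus_scaled_norm_sublevel:
  assumes "\<mu> < 1"
  shows "bounded {x :: real^'n. l1norm x - \<mu> * norm x \<le> \<alpha>}"
proof -
  have "norm x \<le> \<alpha> / (1 - \<mu>)" if "l1norm x - \<mu> * norm x \<le> \<alpha>" for x :: "real^'n"
  proof -
    have "(1 - \<mu>) * norm x \<le> \<alpha>"
      using that norm_le_l1_cart[of x] by (simp add: l1norm_def algebra_simps)
    then show ?thesis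
      using assms by (simp add: pos_le_divide_eq mult.commute)
  qed
  then show ?thesis
    by (auto simp: bounded_iff)
qed

lemma vector_matrix_mult_eq_0_iff:
  fixes A :: "real^'n^'q"
  assumes "rank A = CARD('q)"
  shows "c v* A = 0 \<longleftrightarrow> c = 0"
proof -
  have "inj ((*v) (transpose A))"
    using assms by (simp add: rank_transpose full_rank_injective[symmetric])
  then show ?thesis
    by (metis injD matrix_vector_mult_0_right transpose_matrix_vector vector_matrix_mul_rid)
qed

lemma ereal_plus_indicator_fun_le_iff:
  "ereal r + indicator_fun C x \<le> ereal \<alpha> \<longleftrightarrow> x \<in> C \<and> r \<le> \<alpha>"
  by (simp add: indicator_fun_def)

theorem mainTheorem17:
  fixes A :: "real^'n^'q" and b :: "real^'q" and \<mu> \<gamma> \<delta> :: real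
    and g :: "real^'n \<Rightarrow> real" and F :: "real^'n \<Rightarrow> ereal"
  assumes mu: "0 \<le> \<mu>" "\<mu> \<le> 1"
    and rankA: "rank A = CARD('q)"
    and gamma: "\<gamma> > 0"
    and delta: "0 < \<delta>" "\<delta> < LL2 \<gamma> b"
    and g_def: "\<And>x. g x = LL2 \<gamma> (A *v x - b) - \<delta>"
    and F_def: "\<And>x. F x = ereal (l1norm x - \<mu> * norm x) + indicator_fun {y. g y \<le> 0} x"
  shows "(\<forall>x. g x \<le> 0 \<and> g x = 0 \<longrightarrow>
            (\<exists>G. (g has_derivative (\<lambda>h. G \<bullet> h)) (at x) \<and> G \<noteq> 0))
       \<and> (\<mu> < 1 \<longrightarrow> level_bounded F)
       \<and> (\<mu> = 1 \<and> (\<forall>j. column j A \<noteq> 0) \<longrightarrow> level_bounded F)"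
proof -
  have \<gamma>: "\<gamma> \<noteq> 0"
    using gamma by simp
  show ?thesis
  proof (intro conjI impI allI)
    fix x
    assume "g x \<le> 0 \<and> g x = 0"
    then have "A *v x - b \<noteq> 0"
      using g_def[of x] delta(1) by auto
    then have "LL2_grad \<gamma> (A *v x - b) v* A \<noteq> 0"
      by (simp add: vector_matrix_mult_eq_0_iff[OF rankA] LL2_grad_eq_0_iff[OF \<gamma>])
    moreover have "g = (\<lambda>x. LL2 \<gamma> (A *v x - b) - \<delta>)"
      using g_def by (intro ext)
    then have "(g has_derivative (\<lambda>h. (LL2_grad \<gamma> (A *v x - b) v* A) \<bullet> h)) (at x)"
      using has_derivative_diff[OF has_derivative_LL2_affine[OF \<gamma>] has_derivative_const] by simp
    ultimately show "\<exists>G. (g has_derivative (\<lambda>h. G \<bullet> h)) (at x) \<and> G \<noteq> 0"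
      by blast
  next
    assume "\<mu> < 1"
    then show "level_bounded F"
      unfolding level_bounded_def F_def ereal_plus_indicator_fun_le_iff
      by (blast intro: bounded_subset[OF bounded_l1_minus_scaled_norm_sublevel])
  next
    assume "\<mu> = 1 \<and> (\<forall>j. column j A \<noteq> 0)"
    then have cols: "\<And>j. column j A \<noteq> 0" and "\<mu> = 1"
      by auto
    have residuals: "bounded ((\<lambda>y. b + y) ` {y. LL2 \<gamma> y \<le> \<delta>})"
      by (intro bounded_translation bounded_LL2_sublevel \<gamma>)
    show "level_bounded F"
      unfolding level_bounded_def F_def ereal_plus_indicator_fun_le_iff
      by (intro allI bounded_subset[OF bounded_l1_gap_sublevel_preimage[OF cols residuals]])
        (use g_def \<open>\<mu> = 1\<close> in \<open>auto intro: image_eqI[of _ _ "A *v _ - b"]\<close>)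
  qed
qed

end
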